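(* Let $N=(P,T;F)$ be a finite Petri net without isolated elements (every place and transition is incident to some arc), with $T=\{t_1,\dots,t_n\}$. Let $A_0=E$ be the empty module and, for $i=1,\dots,n$, let $A_i = A_{i-1}\bullet[t_i]$ (taking a copy of $[t_i]$ whose node set is disjoint from that of $A_{i-1}$). Then $A_n$ is isomorphic to $[N]$.
   Context: An alphabet $\Sigma$ is a finite set of labels. An interface over $\Sigma$ is a finite set $R$ in which every element carries a label from $\Sigma$ and a positive integer index, such that for each label $l$, if $R$ contains exactly $k$ elements labeled $l$, these carry the indices $1,\dots,k$. A module $G$ over $\Sigma$ is a finite directed graph $(V,E)$ together with two interfaces over $\Sigma$, the left interface ${}^*G\subseteq V$ and the right interface $G^*\subseteq V$ (not necessarily disjoint). Two modules are isomorphic if there is a bijection between their node sets preserving edges, interface membership, labels, and indices. The empty module $E$ has no nodes, no edges, and empty interfaces. Harmonic pairs: for disjoint interfaces $R,S$, elements $r\in R$, $s\in S$ form a harmonic pair $\{r,s\}$ if they have the same label and the same index (in $R$ resp. $S$). Composition: let $A,B$ be modules with disjoint node sets. For each node $x$ of $A$ or $B$ put $x'=\{x,y\}$ if $\{x,y\}$ is a harmonic pair of $A^*$ and ${}^*B$, and $x'=x$ otherwise. For a label $l$ let $m_l$ be the number of $l$-labeled harmonic pairs of $A^*$ and ${}^*B$. $A\bullet B$ has nodes all $x'$ and edges all $(x',z')$ with $(x,z)$ an edge of $A$ or $B$. Left interface: each $x\in{}^*A$ with label $l$, index $n$ gives $x'$ with label $l$, index $n$; each $x\in{}^*B$ without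 harmonic partner in $A^*$, with label $l$ and index $n$ in ${}^*B$, belongs with index $p+n-m_l$, $p$ the number of $l$-labeled elements of ${}^*A$. Right interface: each $x\in B^*$ with label $l$, index $n$ gives $x'$ with label $l$, index $n$; each $x\in A^*$ without harmonic partner in ${}^*B$, with label $l$ and index $n$ in $A^*$, belongs with index $q+n-m_l$, $q$ the number of $l$-labeled elements of $B^*$. Transition atoms: for a net $N=(P,T;F)$ with presets ${}^\bullet t$ and postsets $t^\bullet$, and $t\in T$, the module $[t]$ has node set ${}^\bullet t\cup t^\bullet\cup\{t\}$, edge set $({}^\bullet t\times\{t\})\cup(\{t\}\times t^\bullet)$, and both interfaces equal to ${}^\bullet t\cup t^\bullet$, where each interface place is labeled by its own identity (the alphabet is $P$; hence all indices are $1$). The module $[N]$ is the graph $(P\cup T, F)$ with both interfaces equal to $P$, each place labeled by its own identity. *)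

theory Defs
  imports Main "HOL-Library.FSet"
begin

text \<open>Node type closed under the composition construction: a node of a
composed module is the (finite) set of the nodes it arises from.  Unmatched
nodes x become Merge {|x|}, harmonic pairs x,y become Merge {|x,y|}; this is
an injective renaming of the paper's convention (x' = x resp. x' = {x,y}).\<close>

datatype 'a node = Atom 'a | Merge "'a node fset"

text \<open>An interface is encoded as a partial map from nodes to (label, index);
its domain is the interface.\<close>

record ('v, 'l) pmodule =
  nodes :: "'v set"
  edges :: "('v \<times> 'v) set"
  lif   :: "'v \<Rightarrow> ('l \<times> nat) option"
  rif   :: "'v \<Rightarrow> ('l \<times> nat) option"

definition labelled :: "('v \<Rightarrow> ('l \<times> nat) option) \<Rightarrow> 'l \<Rightarrow> 'v set" where
  "labelled f l = {x. \<exists>n. f x = Some (l, n)}"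

definition idx :: "('v \<Rightarrow> ('l \<times> nat) option) \<Rightarrow> 'v \<Rightarrow> nat" where
  "idx f x = snd (the (f x))"

definition is_interface :: "'v set \<Rightarrow> ('v \<Rightarrow> ('l \<times> nat) option) \<Rightarrow> bool" where
  "is_interface V f \<longleftrightarrow> finite (dom f) \<and> dom f \<subseteq> V \<and>
     (\<forall>l. idx f ` labelled f l = {1..card (labelled f l)})"

definition is_module :: "('v, 'l) pmodule \<Rightarrow> bool" where
  "is_module G \<longleftrightarrow> finite (nodes G) \<and> edges G \<subseteq> nodes G \<times> nodes G \<and>
     is_interface (nodes G) (lif G) \<and> is_interface (nodes G) (rif G)"

definition mod_iso :: "('v, 'l) pmodule \<Rightarrow> ('w, 'l) pmodule \<Rightarrow> bool" where
  "mod_iso G H \<longleftrightarrow> is_module G \<and> is_module H \<and>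
     (\<exists>h. bij_betw h (nodes G) (nodes H) \<and>
          edges H = (\<lambda>(x, y). (h x, h y)) ` edges G \<and>
          (\<forall>x\<in>nodes G. lif H (h x) = lif G x \<and> rif H (h x) = rif G x))"

definition empty_module :: "('v, 'l) pmodule" where
  "empty_module = \<lparr>nodes = {}, edges = {}, lif = Map.empty, rif = Map.empty\<rparr>"

definition harmonic :: "('v, 'l) pmodule \<Rightarrow> ('v, 'l) pmodule \<Rightarrow> 'v \<Rightarrow> 'v \<Rightarrow> bool" where
  "harmonic A B x y \<longleftrightarrow> rif A x \<noteq> None \<and> rif A x = lif B y"

definition prm :: "('a node, 'l) pmodule \<Rightarrow> ('a node, 'l) pmodule \<Rightarrow> 'a node \<Rightarrow> 'a node" where
  "prm A B x = (if \<exists>y. harmonic A B x y \<or> harmonic A B y x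
     then Merge {|x, SOME y. harmonic A B x y \<or> harmonic A B y x|}
     else Merge {|x|})"

definition mcount :: "('v, 'l) pmodule \<Rightarrow> ('v, 'l) pmodule \<Rightarrow> 'l \<Rightarrow> nat" where
  "mcount A B l = card {(x, y). harmonic A B x y \<and> x \<in> labelled (rif A) l}"

definition compose :: "('a node, 'l) pmodule \<Rightarrow> ('a node, 'l) pmodule \<Rightarrow> ('a node, 'l) pmodule"
  (infixl "\<bullet>" 70) where
  "A \<bullet> B = \<lparr>nodes = prm A B ` (nodes A \<union> nodes B),
     edges = (\<lambda>(x, z). (prm A B x, prm A B z)) ` (edges A \<union> edges B),
     lif = (\<lambda>v.
        if \<exists>x\<in>dom (lif A). prm A B x = v
        then lif A (SOME x. x \<in> dom (lif A) \<and> prm A B x = v)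
        else if \<exists>x\<in>dom (lif B). (\<nexists>y. harmonic A B y x) \<and> prm A B x = v
        then (case lif B (SOME x. x \<in> dom (lif B) \<and> (\<nexists>y. harmonic A B y x) \<and> prm A B x = v) of
                None \<Rightarrow> None
              | Some (l, n) \<Rightarrow> Some (l, card (labelled (lif A) l) + n - mcount A B l))
        else None),
     rif = (\<lambda>v.
        if \<exists>x\<in>dom (rif B). prm A B x = v
        then rif B (SOME x. x \<in> dom (rif B) \<and> prm A B x = v)
        else if \<exists>x\<in>dom (rif A). (\<nexists>y. harmonic A B x y) \<and> prm A B x = v
        then (case rif A (SOME x. x \<in> dom (rif A) \<and> (\<nexists>y. harmonic A B x y) \<and> prm A B x = v) of
                None \<Rightarrow> None
              | Some (l, n) \<Rightarrow> Some (l, card (labelled (rif B) l) + n - mcount A B l))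
        else None)\<rparr>"

definition is_net :: "'x set \<Rightarrow> 'x set \<Rightarrow> ('x \<times> 'x) set \<Rightarrow> bool" where
  "is_net P T F \<longleftrightarrow> P \<inter> T = {} \<and> F \<subseteq> (P \<times> T) \<union> (T \<times> P)"

definition no_isolated :: "'x set \<Rightarrow> 'x set \<Rightarrow> ('x \<times> 'x) set \<Rightarrow> bool" where
  "no_isolated P T F \<longleftrightarrow> (\<forall>x\<in>P \<union> T. \<exists>y. (x, y) \<in> F \<or> (y, x) \<in> F)"

definition preset :: "('x \<times> 'x) set \<Rightarrow> 'x \<Rightarrow> 'x set" where
  "preset F t = {p. (p, t) \<in> F}"

definition postset :: "('x \<times> 'x) set \<Rightarrow> 'x \<Rightarrow> 'x set" where
  "postset F t = {p. (t, p) \<in> F}"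

definition trans_atom :: "('x \<times> 'x) set \<Rightarrow> 'x \<Rightarrow> ('x, 'x) pmodule" where
  "trans_atom F t =
    (let I = preset F t \<union> postset F t in
     \<lparr>nodes = I \<union> {t},
      edges = (preset F t \<times> {t}) \<union> ({t} \<times> postset F t),
      lif = (\<lambda>x. if x \<in> I then Some (x, 1) else None),
      rif = (\<lambda>x. if x \<in> I then Some (x, 1) else None)\<rparr>)"

definition net_module :: "'x set \<Rightarrow> 'x set \<Rightarrow> ('x \<times> 'x) set \<Rightarrow> ('x, 'x) pmodule" where
  "net_module P T F =
     \<lparr>nodes = P \<union> T, edges = F,
      lif = (\<lambda>x. if x \<in> P then Some (x, 1) else None),
      rif = (\<lambda>x. if x \<in> P then Some (x, 1) else None)\<rparr>"

end

theory Submission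
  imports Defs
begin

text \<open>Each prefix composition \<open>A\<^sub>k\<close> is a copy of the subnet spanned by the transitions
\<open>t\<^sub>1, \<dots>, t\<^sub>k\<close>: its nodes are these transitions and their adjacent places, and its two
interfaces both consist of the adjacent places, each labelled by itself with index 1.  When such a
copy is composed with \<open>[t\<^sub>k\<^sub>+\<^sub>1]\<close>, the only nodes the two sides have in common are
interface places, so the harmonic pairs are exactly the pairs of nodes standing for the same place
and composition glues the two graphs along place names.  Every label occurs at most once in each
interface, so the index arithmetic of the composition is trivial and the glued module is again
self-labelled.  Without isolated elements the subnet spanned by all transitions is the whole net.\<close>

definition label_along :: "('v \<Rightarrow> 'l) \<Rightarrow> 'v set \<Rightarrow> 'l set \<Rightarrow> 'v \<Rightarrow> ('l \<times> nat) option" where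
  "label_along h N I x = (if x \<in> N \<and> h x \<in> I then Some (h x, 1) else None)"

definition self_labelled_module :: "'x set \<Rightarrow> ('x \<times> 'x) set \<Rightarrow> 'x set \<Rightarrow> ('x, 'x) pmodule" where
  "self_labelled_module V E I =
     \<lparr>nodes = V, edges = E, lif = label_along id V I, rif = label_along id V I\<rparr>"

definition self_labelled_iso ::
    "('v, 'l) pmodule \<Rightarrow> ('v \<Rightarrow> 'l) \<Rightarrow> 'l set \<Rightarrow> ('l \<times> 'l) set \<Rightarrow> 'l set \<Rightarrow> bool" where
  "self_labelled_iso M h V E I \<longleftrightarrow>
     bij_betw h (nodes M) V \<and> edges M \<subseteq> nodes M \<times> nodes M \<and>
     (\<lambda>(x, y). (h x, h y)) ` edges M = E \<and>
     lif M = label_along h (nodes M) I \<and> rif M = label_along h (nodes M) I"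

lemma dom_label_along: "dom (label_along h N I) = {x \<in> N. h x \<in> I}"
  by (auto simp: label_along_def split: if_splits)

lemma labelled_label_along: "labelled (label_along h N I) l = {x \<in> N. h x = l \<and> l \<in> I}"
  by (auto simp: labelled_def label_along_def split: if_splits)

lemma is_interface_label_along:
  assumes "finite N" and "inj_on h N"
  shows "is_interface N (label_along h N I)"
proof -
  have "idx (label_along h N I) ` labelled (label_along h N I) l
          = {1..card (labelled (label_along h N I) l)}" for l
  proof (cases "\<exists>x\<in>N. h x = l \<and> l \<in> I")
    case True
    then obtain a where "a \<in> N" "h a = l" "l \<in> I" by blast
    with assms(2) have "labelled (label_along h N I) l = {a}"
      by (auto simp: labelled_label_along inj_on_def)
    then show ?thesis using \<open>a \<in> N\<close> \<open>h a = l\<close> \<open>l \<in> I\<close> by (simp add: idx_def label_along_def)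
  next
    case False
    then have "labelled (label_along h N I) l = {}" by (auto simp: labelled_label_along)
    then show ?thesis by simp
  qed
  with assms(1) show ?thesis by (auto simp: is_interface_def dom_label_along)
qed

lemma self_labelled_iso_mod_iso:
  assumes iso: "self_labelled_iso M h V E I" and "finite V" and "E \<subseteq> V \<times> V"
  shows "mod_iso M (self_labelled_module V E I)"
proof -
  have bij: "bij_betw h (nodes M) V" using iso by (simp add: self_labelled_iso_def)
  then have "finite (nodes M)" using \<open>finite V\<close> bij_betw_finite by blast
  with iso bij have "is_module M"
    by (auto simp: is_module_def self_labelled_iso_def bij_betw_def intro: is_interface_label_along)
  moreover have "is_module (self_labelled_module V E I)"
    using \<open>finite V\<close> \<open>E \<subseteq> V \<times> V\<close>
    by (simp add: is_module_def self_labelled_module_def is_interface_label_along)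
  ultimately show ?thesis
    using iso bij unfolding mod_iso_def
    by (auto simp: self_labelled_iso_def self_labelled_module_def label_along_def bij_betw_def)
qed

lemma mod_iso_self_labelled_iso:
  assumes "mod_iso M (self_labelled_module V E I)"
  obtains h where "self_labelled_iso M h V E I"
proof -
  from assms obtain h where bij: "bij_betw h (nodes M) V"
    and E: "E = (\<lambda>(x, y). (h x, h y)) ` edges M"
    and ifaces: "\<forall>x\<in>nodes M. label_along id V I (h x) = lif M x \<and> label_along id V I (h x) = rif M x"
    and M: "is_module M"
    unfolding mod_iso_def by (auto simp: self_labelled_module_def)
  have "f x = label_along h (nodes M) I x"
    if "f = lif M \<or> f = rif M" for f x
  proof (cases "x \<in> nodes M")
    case True
    then show ?thesis using that ifaces bij by (auto simp: label_along_def bij_betw_def)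
  next
    case False
    with M that have "x \<notin> dom f" by (auto simp: is_module_def is_interface_def)
    with False show ?thesis by (auto simp: label_along_def)
  qed
  with bij E M have "self_labelled_iso M h V E I"
    by (auto simp: self_labelled_iso_def is_module_def)
  then show thesis by (rule that)
qed

lemma nodes_compose_eq: "nodes (A \<bullet> B) = prm A B ` (nodes A \<union> nodes B)"
  by (simp add: compose_def)

lemma edges_compose_eq:
  "edges (A \<bullet> B) = (\<lambda>(x, z). (prm A B x, prm A B z)) ` (edges A \<union> edges B)"
  by (simp add: compose_def)

lemma prm_unique_partner:
  assumes "\<And>z. harmonic A B x z \<or> harmonic A B z x \<longleftrightarrow> z = y"
  shows "prm A B x = Merge {|x, y|}"
  using assms by (simp add: prm_def)

lemma prm_no_partner:
  assumes "\<And>z. \<not> (harmonic A B x z \<or> harmonic A B z x)"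
  shows "prm A B x = Merge {|x|}"
  using assms by (simp add: prm_def)

text \<open>Both interface clauses of \<open>A \<bullet> B\<close> have the shape of \<open>e\<close> below: the left one with
\<open>f, g\<close> the left interfaces of the two factors, the right one with \<open>f, g\<close> the right interfaces
of the second and the first factor.\<close>

lemma glued_interface_value:
  assumes e: "e = (if \<exists>x\<in>dom f. p x = v then f (SOME x. x \<in> dom f \<and> p x = v)
          else if \<exists>x\<in>dom g. Q x \<and> p x = v
          then (case g (SOME x. x \<in> dom g \<and> Q x \<and> p x = v) of
                  None \<Rightarrow> None
                | Some (l, n) \<Rightarrow> Some (l, s l n))
          else None)"
    and from_f: "\<And>x. x \<in> dom f \<Longrightarrow> p x \<in> W \<and> k (p x) \<in> I \<and> f x = Some (k (p x), 1)"
    and onto_f: "v \<in> W \<Longrightarrow> k v \<in> I \<Longrightarrow> \<exists>x\<in>dom f. p x = v"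
    and from_g: "\<And>x. x \<in> dom g \<Longrightarrow> p x \<in> W \<and> k (p x) \<in> J \<and> g x = Some (k (p x), 1)"
    and onto_g: "v \<in> W \<Longrightarrow> k v \<in> J \<Longrightarrow> k v \<notin> I \<Longrightarrow> \<exists>x\<in>dom g. Q x \<and> p x = v"
    and shift: "k v \<notin> I \<Longrightarrow> s (k v) 1 = 1"
  shows "e = (if v \<in> W \<and> k v \<in> I \<union> J then Some (k v, 1) else None)"
proof -
  consider (first) "\<exists>x\<in>dom f. p x = v"
    | (second) "\<not> (\<exists>x\<in>dom f. p x = v)" "\<exists>x\<in>dom g. Q x \<and> p x = v"
    | (neither) "\<not> (\<exists>x\<in>dom f. p x = v)" "\<not> (\<exists>x\<in>dom g. Q x \<and> p x = v)"
    by blast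
  then show ?thesis
  proof cases
    case first
    then have "(SOME x. x \<in> dom f \<and> p x = v) \<in> dom f \<and> p (SOME x. x \<in> dom f \<and> p x = v) = v"
      using someI_ex[of "\<lambda>x. x \<in> dom f \<and> p x = v"] by blast
    with first from_f show ?thesis by (force simp: e)
  next
    case second
    then have "(SOME x. x \<in> dom g \<and> Q x \<and> p x = v) \<in> dom g \<and> p (SOME x. x \<in> dom g \<and> Q x \<and> p x = v) = v"
      using someI_ex[of "\<lambda>x. x \<in> dom g \<and> Q x \<and> p x = v"] by blast
    with second from_g onto_f shift show ?thesis by (force simp: e)
  qed (use onto_f onto_g e in auto)
qed

locale self_labelled_composition =
  fixes A B :: "('a node, 'l) pmodule"
    and hA hB :: "'a node \<Rightarrow> 'l"
    and VA VB IA IB :: "'l set"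
    and EA EB :: "('l \<times> 'l) set"
  assumes iso_A: "self_labelled_iso A hA VA EA IA"
    and iso_B: "self_labelled_iso B hB VB EB IB"
    and finite_VA: "finite VA" and finite_VB: "finite VB"
    and IA_subset: "IA \<subseteq> VA" and IB_subset: "IB \<subseteq> VB"
    and disjoint_nodes: "nodes A \<inter> nodes B = {}"
    and shared_labels: "VA \<inter> VB \<subseteq> IA \<inter> IB"
begin

lemma bij_A: "bij_betw hA (nodes A) VA" and bij_B: "bij_betw hB (nodes B) VB"
  using iso_A iso_B by (simp_all add: self_labelled_iso_def)

lemma interfaces_A: "lif A = label_along hA (nodes A) IA" "rif A = label_along hA (nodes A) IA"
  and interfaces_B: "lif B = label_along hB (nodes B) IB" "rif B = label_along hB (nodes B) IB"
  using iso_A iso_B by (simp_all add: self_labelled_iso_def)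

lemma harmonic_iff: "harmonic A B x y \<longleftrightarrow> x \<in> nodes A \<and> y \<in> nodes B \<and> hA x = hB y"
proof -
  have "hA x \<in> IA \<and> hB y \<in> IB" if "x \<in> nodes A" "y \<in> nodes B" "hA x = hB y"
    using that bij_A bij_B shared_labels by (auto simp: bij_betw_def)
  then show ?thesis
    by (auto simp: harmonic_def interfaces_A interfaces_B label_along_def)
qed

definition label :: "'a node \<Rightarrow> 'l" where
  "label x = (if x \<in> nodes A then hA x else hB x)"

definition fiber :: "'l \<Rightarrow> 'a node set" where
  "fiber w = {x \<in> nodes A \<union> nodes B. label x = w}"

definition glued :: "'l \<Rightarrow> 'a node" where
  "glued w = Merge (Abs_fset (fiber w))"

lemma label_A: "x \<in> nodes A \<Longrightarrow> label x = hA x"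
  and label_B: "x \<in> nodes B \<Longrightarrow> label x = hB x"
  using disjoint_nodes by (auto simp: label_def)

lemma label_image: "label ` (nodes A \<union> nodes B) = VA \<union> VB"
  using bij_A bij_B label_A label_B by (force simp: bij_betw_def image_Un)

lemma finite_fiber: "finite (fiber w)"
  using bij_A bij_B finite_VA finite_VB by (auto simp: fiber_def bij_betw_finite)

lemma fiber_same_side:
  assumes "y \<in> fiber w" "z \<in> fiber w" "y \<in> nodes A \<longleftrightarrow> z \<in> nodes A"
  shows "y = z"
  using assms bij_A bij_B label_A label_B
  by (auto simp: fiber_def bij_betw_def dest: inj_onD)

lemma partner_iff:
  assumes "x \<in> nodes A \<union> nodes B"
  shows "harmonic A B x z \<or> harmonic A B z x \<longleftrightarrow> z \<in> fiber (label x) \<and> z \<noteq> x"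
proof
  assume "harmonic A B x z \<or> harmonic A B z x"
  then show "z \<in> fiber (label x) \<and> z \<noteq> x"
    using disjoint_nodes by (auto simp: harmonic_iff fiber_def label_A label_B)
next
  assume z: "z \<in> fiber (label x) \<and> z \<noteq> x"
  with assms have "x \<in> fiber (label x)" by (simp add: fiber_def)
  with z have "x \<in> nodes A \<longleftrightarrow> z \<notin> nodes A" using fiber_same_side by blast
  with z assms show "harmonic A B x z \<or> harmonic A B z x"
    by (auto simp: harmonic_iff fiber_def label_A label_B)
qed

lemma prm_eq_glued:
  assumes x: "x \<in> nodes A \<union> nodes B"
  shows "prm A B x = glued (label x)"
proof (cases "\<exists>y. y \<in> fiber (label x) \<and> y \<noteq> x")
  case True
  then obtain y where y: "y \<in> fiber (label x)" "y \<noteq> x" by blast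
  have x_fiber: "x \<in> fiber (label x)" using x by (simp add: fiber_def)
  have "z = y" if "z \<in> fiber (label x)" "z \<noteq> x" for z
    using fiber_same_side[OF x_fiber that(1)] fiber_same_side[OF x_fiber y(1)]
      fiber_same_side[OF that(1) y(1)] that(2) y(2) by blast
  with y x_fiber have fiber: "fiber (label x) = {x, y}" by blast
  have "prm A B x = Merge {|x, y|}"
    by (rule prm_unique_partner) (use partner_iff[OF x] fiber y in auto)
  also have "{|x, y|} = Abs_fset {x, y}" by (metis fset_inverse fset_simps)
  finally show ?thesis by (simp add: glued_def fiber)
next
  case False
  with x have fiber: "fiber (label x) = {x}" by (auto simp: fiber_def)
  have "prm A B x = Merge {|x|}"
    by (rule prm_no_partner) (use partner_iff[OF x] fiber in auto)
  also have "{|x|} = Abs_fset {x}" by (metis fset_inverse fset_simps)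
  finally show ?thesis by (simp add: glued_def fiber)
qed

lemma inj_on_glued: "inj_on glued (VA \<union> VB)"
proof (rule inj_onI)
  fix w w' assume w: "w \<in> VA \<union> VB" and "glued w = glued w'"
  then have "fiber w = fiber w'" by (simp add: glued_def finite_fiber Abs_fset_inject)
  moreover obtain y where "y \<in> nodes A \<union> nodes B" "label y = w" using w label_image by force
  ultimately show "w = w'" by (auto simp: fiber_def)
qed

lemma nodes_compose: "nodes (A \<bullet> B) = glued ` (VA \<union> VB)"
proof -
  have "nodes (A \<bullet> B) = prm A B ` (nodes A \<union> nodes B)" by (rule nodes_compose_eq)
  also have "\<dots> = glued ` label ` (nodes A \<union> nodes B)"
    using prm_eq_glued by (auto simp: image_iff)
  finally show ?thesis by (simp add: label_image)
qed

definition unglue :: "'a node \<Rightarrow> 'l" where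
  "unglue = inv_into (VA \<union> VB) glued"

lemma bij_unglue: "bij_betw unglue (nodes (A \<bullet> B)) (VA \<union> VB)"
  unfolding unglue_def nodes_compose by (rule bij_betw_inv_into) (simp add: bij_betw_def inj_on_glued)

lemma unglue_prm:
  assumes "x \<in> nodes A \<union> nodes B"
  shows "unglue (prm A B x) = label x"
proof -
  have "label x \<in> VA \<union> VB" using assms label_image by blast
  then show ?thesis
    using assms by (simp add: unglue_def prm_eq_glued inv_into_f_f[OF inj_on_glued])
qed

lemma prm_in_nodes: "x \<in> nodes A \<union> nodes B \<Longrightarrow> prm A B x \<in> nodes (A \<bullet> B)"
  by (simp add: nodes_compose_eq)

lemma prm_eq_iff:
  assumes "x \<in> nodes A \<union> nodes B" and "v \<in> nodes (A \<bullet> B)"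
  shows "prm A B x = v \<longleftrightarrow> unglue v = label x"
proof -
  obtain w where w: "w \<in> VA \<union> VB" "v = glued w" using assms(2) nodes_compose by auto
  then have "unglue v = w" by (simp add: unglue_def inv_into_f_f[OF inj_on_glued])
  moreover have "label x \<in> VA \<union> VB" using assms(1) label_image by blast
  ultimately show ?thesis
    using w assms(1) inj_on_glued by (auto simp: prm_eq_glued dest: inj_onD)
qed

lemma edges_compose:
  "edges (A \<bullet> B) \<subseteq> nodes (A \<bullet> B) \<times> nodes (A \<bullet> B)"
  "(\<lambda>(x, y). (unglue x, unglue y)) ` edges (A \<bullet> B) = EA \<union> EB"
proof -
  have eA: "edges A \<subseteq> nodes A \<times> nodes A" and eB: "edges B \<subseteq> nodes B \<times> nodes B"
    using iso_A iso_B by (simp_all add: self_labelled_iso_def)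
  then show "edges (A \<bullet> B) \<subseteq> nodes (A \<bullet> B) \<times> nodes (A \<bullet> B)"
    using prm_in_nodes by (auto simp: edges_compose_eq)
  have "(\<lambda>(x, y). (unglue x, unglue y)) ` edges (A \<bullet> B)
      = (\<lambda>(x, y). (label x, label y)) ` (edges A \<union> edges B)"
    unfolding edges_compose_eq image_image
    by (rule image_cong) (use eA eB unglue_prm in \<open>auto split: prod.splits\<close>)
  also have "\<dots> = (\<lambda>(x, y). (hA x, hA y)) ` edges A \<union> (\<lambda>(x, y). (hB x, hB y)) ` edges B"
    unfolding image_Un using eA eB label_A label_B
    by (intro arg_cong2[where f = "(\<union>)"] image_cong) (auto split: prod.splits)
  finally show "(\<lambda>(x, y). (unglue x, unglue y)) ` edges (A \<bullet> B) = EA \<union> EB"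
    using iso_A iso_B by (simp add: self_labelled_iso_def)
qed

lemma interface_A_prm:
  "x \<in> dom (label_along hA (nodes A) IA) \<Longrightarrow> prm A B x \<in> nodes (A \<bullet> B) \<and>
     unglue (prm A B x) \<in> IA \<and> label_along hA (nodes A) IA x = Some (unglue (prm A B x), 1)"
  by (auto simp: dom_label_along label_along_def prm_in_nodes unglue_prm label_A)

lemma interface_B_prm:
  "x \<in> dom (label_along hB (nodes B) IB) \<Longrightarrow> prm A B x \<in> nodes (A \<bullet> B) \<and>
     unglue (prm A B x) \<in> IB \<and> label_along hB (nodes B) IB x = Some (unglue (prm A B x), 1)"
  by (auto simp: dom_label_along label_along_def prm_in_nodes unglue_prm label_B)

lemma interface_A_onto:
  assumes "v \<in> nodes (A \<bullet> B)" "unglue v \<in> IA"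
  shows "\<exists>x\<in>dom (label_along hA (nodes A) IA). hA x = unglue v \<and> prm A B x = v"
proof -
  from assms(2) IA_subset bij_A obtain x where "x \<in> nodes A" "hA x = unglue v"
    by (metis bij_betw_imp_surj_on imageE subsetD)
  with assms show ?thesis by (auto simp: prm_eq_iff label_A dom_label_along)
qed

lemma interface_B_onto:
  assumes "v \<in> nodes (A \<bullet> B)" "unglue v \<in> IB"
  shows "\<exists>x\<in>dom (label_along hB (nodes B) IB). hB x = unglue v \<and> prm A B x = v"
proof -
  from assms(2) IB_subset bij_B obtain x where "x \<in> nodes B" "hB x = unglue v"
    by (metis bij_betw_imp_surj_on imageE subsetD)
  with assms show ?thesis by (auto simp: prm_eq_iff label_B dom_label_along)
qed

lemma harmonic_shared: "harmonic A B x y \<Longrightarrow> hA x = hB y \<and> hA x \<in> IA \<inter> IB"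
  by (auto simp: harmonic_def interfaces_A interfaces_B label_along_def split: if_splits)

lemma mcount_unshared: "l \<notin> IA \<inter> IB \<Longrightarrow> mcount A B l = 0"
proof -
  assume "l \<notin> IA \<inter> IB"
  then have "{(x, y). harmonic A B x y \<and> x \<in> labelled (rif A) l} = {}"
    using bij_A bij_B shared_labels
    by (auto simp: harmonic_iff interfaces_A labelled_label_along bij_betw_def)
  then show ?thesis unfolding mcount_def by (metis card.empty)
qed

lemma lif_compose: "lif (A \<bullet> B) = label_along unglue (nodes (A \<bullet> B)) (IA \<union> IB)"
proof
  fix v
  show "lif (A \<bullet> B) v = label_along unglue (nodes (A \<bullet> B)) (IA \<union> IB) v"
    unfolding label_along_def
  proof (rule glued_interface_value[where e = "lif (A \<bullet> B) v" and f = "lif A" and g = "lif B" and p = "prm A B"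
        and Q = "\<lambda>x. \<nexists>y. harmonic A B y x" and k = unglue and W = "nodes (A \<bullet> B)"
        and I = IA and J = IB and s = "\<lambda>l n. card (labelled (lif A) l) + n - mcount A B l"],
        simp only: compose_def pmodule.select_convs)
    show "\<And>x. x \<in> dom (lif A) \<Longrightarrow> prm A B x \<in> nodes (A \<bullet> B) \<and>
        unglue (prm A B x) \<in> IA \<and> lif A x = Some (unglue (prm A B x), 1)"
      unfolding interfaces_A by (rule interface_A_prm)
    show "\<And>x. x \<in> dom (lif B) \<Longrightarrow> prm A B x \<in> nodes (A \<bullet> B) \<and>
        unglue (prm A B x) \<in> IB \<and> lif B x = Some (unglue (prm A B x), 1)"
      unfolding interfaces_B by (rule interface_B_prm)
    show "v \<in> nodes (A \<bullet> B) \<Longrightarrow> unglue v \<in> IA \<Longrightarrow> \<exists>x\<in>dom (lif A). prm A B x = v"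
      unfolding interfaces_A using interface_A_onto by blast
    show "\<exists>x\<in>dom (lif B). (\<nexists>y. harmonic A B y x) \<and> prm A B x = v"
      if v: "v \<in> nodes (A \<bullet> B)" "unglue v \<in> IB" "unglue v \<notin> IA"
    proof -
      obtain x where "x \<in> dom (lif B)" "hB x = unglue v" "prm A B x = v"
        using interface_B_onto[OF v(1,2)] interfaces_B by auto
      moreover have "\<nexists>y. harmonic A B y x" using harmonic_shared v(3) \<open>hB x = unglue v\<close> by force
      ultimately show ?thesis by blast
    qed
    show "unglue v \<notin> IA \<Longrightarrow> card (labelled (lif A) (unglue v)) + 1 - mcount A B (unglue v) = 1"
      by (simp add: interfaces_A labelled_label_along mcount_unshared)
  qed
qed

lemma rif_compose: "rif (A \<bullet> B) = label_along unglue (nodes (A \<bullet> B)) (IA \<union> IB)"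
proof
  fix v
  show "rif (A \<bullet> B) v = label_along unglue (nodes (A \<bullet> B)) (IA \<union> IB) v"
    unfolding label_along_def Un_commute[of IA]
  proof (rule glued_interface_value[where e = "rif (A \<bullet> B) v" and f = "rif B" and g = "rif A" and p = "prm A B"
        and Q = "\<lambda>x. \<nexists>y. harmonic A B x y" and k = unglue and W = "nodes (A \<bullet> B)"
        and I = IB and J = IA and s = "\<lambda>l n. card (labelled (rif B) l) + n - mcount A B l"],
        simp only: compose_def pmodule.select_convs)
    show "\<And>x. x \<in> dom (rif B) \<Longrightarrow> prm A B x \<in> nodes (A \<bullet> B) \<and>
        unglue (prm A B x) \<in> IB \<and> rif B x = Some (unglue (prm A B x), 1)"
      unfolding interfaces_B by (rule interface_B_prm)
    show "\<And>x. x \<in> dom (rif A) \<Longrightarrow> prm A B x \<in> nodes (A \<bullet> B) \<and>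
        unglue (prm A B x) \<in> IA \<and> rif A x = Some (unglue (prm A B x), 1)"
      unfolding interfaces_A by (rule interface_A_prm)
    show "v \<in> nodes (A \<bullet> B) \<Longrightarrow> unglue v \<in> IB \<Longrightarrow> \<exists>x\<in>dom (rif B). prm A B x = v"
      unfolding interfaces_B using interface_B_onto by blast
    show "\<exists>x\<in>dom (rif A). (\<nexists>y. harmonic A B x y) \<and> prm A B x = v"
      if v: "v \<in> nodes (A \<bullet> B)" "unglue v \<in> IA" "unglue v \<notin> IB"
    proof -
      obtain x where "x \<in> dom (rif A)" "hA x = unglue v" "prm A B x = v"
        using interface_A_onto[OF v(1,2)] interfaces_A by auto
      moreover have "\<nexists>y. harmonic A B x y" using harmonic_shared v(3) \<open>hA x = unglue v\<close> by force
      ultimately show ?thesis by blast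
    qed
    show "unglue v \<notin> IB \<Longrightarrow> card (labelled (rif B) (unglue v)) + 1 - mcount A B (unglue v) = 1"
      by (simp add: interfaces_B labelled_label_along mcount_unshared)
  qed
qed

lemma compose_self_labelled_iso:
  "self_labelled_iso (A \<bullet> B) unglue (VA \<union> VB) (EA \<union> EB) (IA \<union> IB)"
  unfolding self_labelled_iso_def
  using bij_unglue edges_compose lif_compose rif_compose by blast

end

definition adjacent_places :: "('x \<times> 'x) set \<Rightarrow> 'x set \<Rightarrow> 'x set" where
  "adjacent_places F S = {p. \<exists>s\<in>S. (p, s) \<in> F \<or> (s, p) \<in> F}"

definition incident_arcs :: "('x \<times> 'x) set \<Rightarrow> 'x set \<Rightarrow> ('x \<times> 'x) set" where
  "incident_arcs F S = {(a, b) \<in> F. a \<in> S \<or> b \<in> S}"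

lemma adjacent_places_insert:
  "adjacent_places F (insert t S) = adjacent_places F S \<union> (preset F t \<union> postset F t)"
  by (auto simp: adjacent_places_def preset_def postset_def)

lemma incident_arcs_insert:
  "incident_arcs F (insert t S) = incident_arcs F S \<union> (preset F t \<times> {t} \<union> {t} \<times> postset F t)"
  by (auto simp: incident_arcs_def preset_def postset_def)

lemma adjacent_places_subset: "is_net P T F \<Longrightarrow> S \<subseteq> T \<Longrightarrow> adjacent_places F S \<subseteq> P"
  by (auto simp: is_net_def adjacent_places_def)

lemma adjacent_places_all: "is_net P T F \<Longrightarrow> no_isolated P T F \<Longrightarrow> adjacent_places F T = P"
  by (fastforce simp: is_net_def no_isolated_def adjacent_places_def)

lemma incident_arcs_all: "is_net P T F \<Longrightarrow> incident_arcs F T = F"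
  by (auto simp: is_net_def incident_arcs_def)

lemma trans_atom_self_labelled:
  "trans_atom F t = self_labelled_module (preset F t \<union> postset F t \<union> {t})
     (preset F t \<times> {t} \<union> {t} \<times> postset F t) (preset F t \<union> postset F t)"
  by (auto simp: trans_atom_def self_labelled_module_def label_along_def Let_def fun_eq_iff)

lemma net_module_self_labelled: "net_module P T F = self_labelled_module (P \<union> T) F P"
  by (auto simp: net_module_def self_labelled_module_def label_along_def fun_eq_iff)

lemma compose_transition_atom:
  assumes net: "is_net P T F" and "finite P" and "finite T"
    and "S \<subseteq> T" and "t \<in> T" and "t \<notin> S"
    and M: "self_labelled_iso M h (adjacent_places F S \<union> S) (incident_arcs F S) (adjacent_places F S)"
    and C: "mod_iso C (trans_atom F t)"
    and disjoint: "nodes M \<inter> nodes C = {}"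
  obtains h' where "self_labelled_iso (M \<bullet> C) h' (adjacent_places F (insert t S) \<union> insert t S)
      (incident_arcs F (insert t S)) (adjacent_places F (insert t S))"
proof -
  let ?I = "preset F t \<union> postset F t"
  obtain hC where C': "self_labelled_iso C hC (?I \<union> {t}) (preset F t \<times> {t} \<union> {t} \<times> postset F t) ?I"
    using C unfolding trans_atom_self_labelled by (rule mod_iso_self_labelled_iso)
  have I_places: "?I \<subseteq> P"
    using net \<open>t \<in> T\<close> by (auto simp: is_net_def preset_def postset_def)
  have S_places: "adjacent_places F S \<subseteq> P"
    using adjacent_places_subset[OF net \<open>S \<subseteq> T\<close>] .
  interpret self_labelled_composition M C h hC "adjacent_places F S \<union> S" "?I \<union> {t}"
    "adjacent_places F S" ?I "incident_arcs F S" "preset F t \<times> {t} \<union> {t} \<times> postset F t"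
  proof
    show "finite (adjacent_places F S \<union> S)"
      using S_places \<open>S \<subseteq> T\<close> \<open>finite P\<close> \<open>finite T\<close> by (auto intro: finite_subset)
    show "finite (?I \<union> {t})" using I_places \<open>finite P\<close> by (auto intro: finite_subset)
    show "(adjacent_places F S \<union> S) \<inter> (?I \<union> {t}) \<subseteq> adjacent_places F S \<inter> ?I"
      using net I_places S_places \<open>S \<subseteq> T\<close> \<open>t \<in> T\<close> \<open>t \<notin> S\<close> by (auto simp: is_net_def)
  qed (use M C' disjoint in blast)+
  have "self_labelled_iso (M \<bullet> C) unglue (adjacent_places F S \<union> S \<union> (?I \<union> {t}))
      (incident_arcs F S \<union> (preset F t \<times> {t} \<union> {t} \<times> postset F t)) (adjacent_places F S \<union> ?I)"
    by (rule compose_self_labelled_iso)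
  moreover have "adjacent_places F S \<union> S \<union> (?I \<union> {t}) = adjacent_places F (insert t S) \<union> insert t S"
    by (auto simp: adjacent_places_insert)
  ultimately show thesis
    by (intro that) (simp add: adjacent_places_insert incident_arcs_insert)
qed

lemma composition_prefix_self_labelled:
  fixes t :: "nat \<Rightarrow> 'x" and n k :: nat
  assumes net: "is_net P T F" and "finite P" and "finite T"
    and t: "bij_betw t {1..n} T"
    and A0: "A 0 = empty_module"
    and C: "\<And>i. i \<in> {1..n} \<Longrightarrow> mod_iso (C i) (trans_atom F (t i))"
    and disjoint: "\<And>i. i \<in> {1..n} \<Longrightarrow> nodes (C i) \<inter> nodes (A (i - 1)) = {}"
    and A: "\<And>i. i \<in> {1..n} \<Longrightarrow> A i = A (i - 1) \<bullet> C i"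
  shows "k \<le> n \<Longrightarrow> \<exists>h. self_labelled_iso (A k) h (adjacent_places F (t ` {1..k}) \<union> t ` {1..k})
      (incident_arcs F (t ` {1..k})) (adjacent_places F (t ` {1..k}))"
proof (induction k)
  case 0
  show ?case
    using A0 by (simp add: self_labelled_iso_def empty_module_def bij_betw_def adjacent_places_def
        incident_arcs_def label_along_def fun_eq_iff)
next
  case (Suc k)
  then have i: "Suc k \<in> {1..n}" by simp
  from Suc obtain h where h: "self_labelled_iso (A k) h (adjacent_places F (t ` {1..k}) \<union> t ` {1..k})
      (incident_arcs F (t ` {1..k})) (adjacent_places F (t ` {1..k}))" by auto
  have inj: "inj_on t {1..n}" and onto: "t ` {1..n} = T" using t by (simp_all add: bij_betw_def)
  have "t ` {1..k} \<subseteq> T" "t (Suc k) \<in> T" using onto i Suc.prems by auto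
  moreover have "t (Suc k) \<notin> t ` {1..k}"
  proof
    assume "t (Suc k) \<in> t ` {1..k}"
    then obtain j where "j \<in> {1..k}" "t (Suc k) = t j" by blast
    then show False using inj_onD[OF inj, of "Suc k" j] i Suc.prems by simp
  qed
  moreover have "nodes (A k) \<inter> nodes (C (Suc k)) = {}" using disjoint[OF i] by auto
  ultimately obtain h' where "self_labelled_iso (A k \<bullet> C (Suc k)) h'
      (adjacent_places F (insert (t (Suc k)) (t ` {1..k})) \<union> insert (t (Suc k)) (t ` {1..k}))
      (incident_arcs F (insert (t (Suc k)) (t ` {1..k})))
      (adjacent_places F (insert (t (Suc k)) (t ` {1..k})))"
    by (rule compose_transition_atom[OF net \<open>finite P\<close> \<open>finite T\<close> _ _ _ h C[OF i]])
  moreover have "t ` {1..Suc k} = insert (t (Suc k)) (t ` {1..k})"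
    by (auto simp: atLeastAtMostSuc_conv)
  moreover have "A (Suc k) = A k \<bullet> C (Suc k)" using A[OF i] by simp
  ultimately show ?case by metis
qed

theorem mainTheorem2:
  fixes P T :: "'x set" and F :: "('x \<times> 'x) set"
    and n :: nat and t :: "nat \<Rightarrow> 'x"
    and A C :: "nat \<Rightarrow> ('a node, 'x) pmodule"
  assumes "is_net P T F" and "finite P" and "finite T"
    and "no_isolated P T F"
    and "bij_betw t {1..n} T"
    and "A 0 = empty_module"
    and "\<And>i. i \<in> {1..n} \<Longrightarrow> mod_iso (C i) (trans_atom F (t i))"
    and "\<And>i. i \<in> {1..n} \<Longrightarrow> nodes (C i) \<inter> nodes (A (i - 1)) = {}"
    and "\<And>i. i \<in> {1..n} \<Longrightarrow> A i = A (i - 1) \<bullet> C i"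
  shows "mod_iso (A n) (net_module P T F)"
proof -
  have "t ` {1..n} = T" using assms(5) by (simp add: bij_betw_def)
  moreover have "\<exists>h. self_labelled_iso (A n) h (adjacent_places F (t ` {1..n}) \<union> t ` {1..n})
      (incident_arcs F (t ` {1..n})) (adjacent_places F (t ` {1..n}))"
    by (rule composition_prefix_self_labelled[OF assms(1-3,5-9) order_refl])
  ultimately obtain h where "self_labelled_iso (A n) h (P \<union> T) F P"
    by (auto simp: adjacent_places_all[OF assms(1,4)] incident_arcs_all[OF assms(1)])
  moreover have "F \<subseteq> (P \<union> T) \<times> (P \<union> T)" using assms(1) by (auto simp: is_net_def)
  ultimately show ?thesis
    using assms(2,3) by (simp add: net_module_self_labelled self_labelled_iso_mod_iso)
qed

end
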